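(* Let $\theta=\tilde p/p$ be a rational inner function on $\mathbb{D}^2$ of degree $(1,1)$ with $p(z)=a+bz_1+cz_2+dz_1z_2$, and assume $p$ vanishes at $\tau=(\tau_1,\tau_2)\in\mathbb{T}^2$. Let $\lambda$ satisfy $\lambda^2=\bar ac-d\bar b$ and let $f(z)=\frac{\lambda(z_2-\tau_2)}{p(z)}$. Then \[(M_{z_1}^*f)(z)=f(z)\Big(-\frac{b+dz_2}{a+cz_2}\Big),\qquad (M_{z_1}^*\theta)(z)=f(z)\,\lambda\Big(\frac{z_2-\tau_2}{a+cz_2}\Big).\]
   Context: $\mathbb{D}$ is the open unit disk, $\mathbb{T}$ the unit circle. A rational inner function of degree $(1,1)$ can be written $\theta=\tilde p/p$ with $p$ a polynomial of degree at most one in each variable with no zeros on $\mathbb{D}^2$ and $\tilde p(z)=\bar az_1z_2+\bar bz_2+\bar cz_1+\bar d$, $p,\tilde p$ coprime. $M_{z_1}^*$ denotes the adjoint of multiplication by $z_1$ on the Hardy space $H^2(\mathbb{D}^2)$ (the backward shift in $z_1$: $(M_{z_1}^*F)(z)=(F(z)-F(0,z_2))/z_1$). *)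

theory Defs
  imports "HOL-Analysis.Analysis"
begin

definition bidisc :: "(complex \<times> complex) set" where
  "bidisc = {z. norm (fst z) < 1 \<and> norm (snd z) < 1}"

definition torus2 :: "(complex \<times> complex) set" where
  "torus2 = {z. norm (fst z) = 1 \<and> norm (snd z) = 1}"

definition p11 :: "complex \<Rightarrow> complex \<Rightarrow> complex \<Rightarrow> complex \<Rightarrow> complex \<times> complex \<Rightarrow> complex" where
  "p11 a b c d z = a + b * fst z + c * snd z + d * fst z * snd z"

definition p11_tilde :: "complex \<Rightarrow> complex \<Rightarrow> complex \<Rightarrow> complex \<Rightarrow> complex \<times> complex \<Rightarrow> complex" where
  "p11_tilde a b c d z = cnj a * fst z * snd z + cnj b * snd z + cnj c * fst z + cnj d"

definition bipoly11 :: "(complex \<times> complex \<Rightarrow> complex) \<Rightarrow> bool" where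
  "bipoly11 q \<longleftrightarrow> (\<exists>\<alpha> \<beta> \<gamma> \<delta>. \<forall>z. q z = \<alpha> + \<beta> * fst z + \<gamma> * snd z + \<delta> * fst z * snd z)"

text \<open>Coprimality of two polynomials of bidegree at most (1,1): every common
  polynomial factor is constant. (Any polynomial factor of a nonzero polynomial
  of bidegree at most (1,1) itself has bidegree at most (1,1), and so does the cofactor.)\<close>

definition coprime11 :: "(complex \<times> complex \<Rightarrow> complex) \<Rightarrow> (complex \<times> complex \<Rightarrow> complex) \<Rightarrow> bool" where
  "coprime11 P Q \<longleftrightarrow>
     (\<forall>q r s. bipoly11 q \<and> bipoly11 r \<and> bipoly11 s \<and>
        (\<forall>z. P z = q z * r z) \<and> (\<forall>z. Q z = q z * s z) \<longrightarrow> (\<exists>k. \<forall>z. q z = k))"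

text \<open>Backward shift in z1: (M_{z1}^* F)(z) = (F(z) - F(0,z2))/z1, extended to
  z1 = 0 by its (removable) value, the z1-derivative of F at (0,z2).\<close>

definition bshift1 :: "(complex \<times> complex \<Rightarrow> complex) \<Rightarrow> complex \<times> complex \<Rightarrow> complex" where
  "bshift1 F z = (if fst z = 0 then deriv (\<lambda>w. F (w, snd z)) 0
                  else (F z - F (0, snd z)) / fst z)"

end

theory Submission imports Defs begin

text \<open>The slices of \<open>p\<close> and \<open>p~\<close> at fixed \<open>z\<^sub>2 = y\<close> are affine in \<open>z\<^sub>1\<close>, so on each slice
  \<open>f\<close> and \<open>\<theta>\<close> are linear fractional in \<open>z\<^sub>1\<close>, and the backward shift of \<open>(T + zU)/(A + zB)\<close> is
  \<open>(UA - TB)/((A + zB)A)\<close>. For \<open>\<theta>\<close> the numerator \<open>UA - TB\<close> is a quadratic polynomial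
  \<open>\<gamma>y\<^sup>2 + \<beta>y + \<gamma>\<^sup>*\<close> in \<open>y\<close>, with \<open>\<gamma> = a\<^sup>*c - db\<^sup>*\<close>; on the circle it equals
  \<open>|a + cy|\<^sup>2 - |b + dy|\<^sup>2\<close>, which is nonnegative because \<open>p\<close> has no zeros on the bidisc,
  and it vanishes at \<open>\<tau>\<^sub>2\<close> because \<open>p(\<tau>) = 0\<close>. A nonnegative trigonometric polynomial of
  this form with a zero on the circle is \<open>\<gamma>(y - \<tau>\<^sub>2)\<^sup>2\<close>, i.e. \<open>\<lambda>\<^sup>2(y - \<tau>\<^sub>2)\<^sup>2\<close>.\<close>

lemma norm_sq_diff_on_circle:
  fixes a b c d w :: complex
  assumes "norm w = 1"
  shows "(norm (a + c*w))^2 - (norm (b + d*w))^2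
       = (norm a)^2 + (norm c)^2 - (norm b)^2 - (norm d)^2 + 2 * Re ((cnj a * c - d * cnj b) * w)"
proof -
  have ww: "(norm w)^2 = 1" using assms by simp
  have "(norm (a + c*w))^2 = (norm a)^2 + (norm c)^2 * (norm w)^2 + 2 * Re (cnj a * c * w)"
    unfolding cmod_power2 by (simp add: algebra_simps power2_eq_square)
  moreover have "(norm (b + d*w))^2 = (norm b)^2 + (norm d)^2 * (norm w)^2 + 2 * Re (d * cnj b * w)"
    unfolding cmod_power2 by (simp add: algebra_simps power2_eq_square)
  ultimately show ?thesis using ww by (simp add: algebra_simps)
qed

lemma nonneg_on_circle_root_square:
  fixes \<beta> :: real and \<gamma> t y :: complex
  assumes nonneg: "\<And>w. norm w = 1 \<Longrightarrow> \<beta> + 2 * Re (\<gamma> * w) \<ge> 0"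
    and t: "norm t = 1" and root: "\<beta> + 2 * Re (\<gamma> * t) = 0"
  shows "\<gamma> * y^2 + of_real \<beta> * y + cnj \<gamma> = \<gamma> * (y - t)^2"
proof -
  have \<gamma>t: "\<gamma> * t = - of_real (norm \<gamma>)"
  proof (cases "\<gamma> = 0")
    case True
    then show ?thesis by simp
  next
    case False
    \<comment> \<open>\<open>w0\<close> minimises \<open>Re (\<gamma> * w)\<close> on the circle.\<close>
    define w0 where "w0 = - cnj \<gamma> / of_real (norm \<gamma>)"
    have "norm w0 = 1" using False by (simp add: w0_def norm_divide)
    moreover have "\<gamma> * w0 = - of_real (norm \<gamma>)" using False unfolding w0_def
      by (simp add: complex_norm_square[symmetric] power2_eq_square field_simps del: of_real_mult) (simp only: of_real_mult)
    ultimately have "\<beta> \<ge> 2 * norm \<gamma>" using nonneg by fastforce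
    moreover have "- Re (\<gamma> * t) \<le> norm \<gamma>"
      using abs_Re_le_cmod[of "\<gamma> * t"] t by (simp add: norm_mult)
    ultimately have R: "Re (\<gamma> * t) = - norm \<gamma>" using root by linarith
    hence "(Im (\<gamma> * t))^2 = 0" using cmod_power2[of "\<gamma> * t"] t by (simp add: norm_mult)
    with R show ?thesis by (simp add: complex_eq_iff)
  qed
  have \<beta>: "of_real \<beta> = - 2 * \<gamma> * t" using root \<gamma>t by (simp add: complex_eq_iff algebra_simps)
  have "cnj t * t = 1" using t complex_norm_square[of t] by (simp add: mult.commute)
  moreover have "cnj \<gamma> * cnj t = \<gamma> * t" using \<gamma>t by (metis complex_cnj_complex_of_real complex_cnj_minus complex_cnj_mult)
  ultimately have "cnj \<gamma> = \<gamma> * t^2" by (metis mult.assoc mult.right_neutral power2_eq_square)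
  then show ?thesis unfolding \<beta> by (simp add: algebra_simps power2_eq_square)
qed

lemma p11_no_zeros_bidisc_norm_le:
  fixes a b c d w :: complex
  assumes nozero: "\<forall>z\<in>bidisc. p11 a b c d z \<noteq> 0" and w: "norm w = 1"
  shows "norm (b + d * w) \<le> norm (a + c * w)"
proof (rule ccontr)
  \<comment> \<open>Otherwise \<open>p(\<cdot>, rw)\<close> has a zero in the disc for some \<open>r < 1\<close> close to 1.\<close>
  let ?g = "\<lambda>r::real. norm (b + d * (of_real r * w)) - norm (a + c * (of_real r * w))"
  assume "\<not> ?thesis"
  hence pos: "?g 1 > 0" by simp
  have "(?g \<longlongrightarrow> ?g 1) (at_left 1)"
    by (intro tendsto_intros tendsto_ident_at)
  from order_tendstoD(1)[OF this pos] have "eventually (\<lambda>r. ?g r > 0) (at_left 1)" .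
  from eventually_happens[OF eventually_conj[OF this eventually_at_left_real[of 0 1]]]
  obtain r where r: "?g r > 0" "0 < r" "r < 1" by auto
  define y where "y = of_real r * w"
  define x where "x = - ((a + c * y) / (b + d * y))"
  have B: "b + d * y \<noteq> 0" using r(1) unfolding y_def by auto
  have "norm y < 1" using r w unfolding y_def by (simp add: norm_mult)
  moreover have "norm x < 1"
    using r(1) B unfolding x_def y_def[symmetric] by (simp add: norm_divide divide_less_eq)
  moreover have "p11 a b c d (x, y) = 0" using B unfolding p11_def x_def by (simp add: field_simps)
  ultimately show False using nozero by (auto simp: bidisc_def)
qed

lemma p11_slice_determinant:
  fixes a b c d y :: complex and \<tau> :: "complex \<times> complex"
  assumes nozero: "\<forall>z\<in>bidisc. p11 a b c d z \<noteq> 0"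
    and tau: "\<tau> \<in> torus2" and ptau: "p11 a b c d \<tau> = 0"
  shows "(cnj a * y + cnj c) * (a + c * y) - (cnj b * y + cnj d) * (b + d * y)
         = (cnj a * c - d * cnj b) * (y - snd \<tau>)^2"
proof -
  define \<beta> where "\<beta> = (norm a)^2 + (norm c)^2 - (norm b)^2 - (norm d)^2"
  define \<gamma> where "\<gamma> = cnj a * c - d * cnj b"
  obtain s t where \<tau>: "\<tau> = (s, t)" and s: "norm s = 1" and t: "norm t = 1"
    using tau by (cases \<tau>) (auto simp: torus2_def)
  have nonneg: "\<beta> + 2 * Re (\<gamma> * w) \<ge> 0" if w: "norm w = 1" for w
  proof -
    have "(norm (b + d * w))^2 \<le> (norm (a + c * w))^2"
      using p11_no_zeros_bidisc_norm_le[OF nozero w] by (simp add: power_mono)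
    then show ?thesis using norm_sq_diff_on_circle[OF w, of a c b d] unfolding \<beta>_def \<gamma>_def by linarith
  qed
  have "a + c * t = - ((b + d * t) * s)"
    using ptau unfolding \<tau> p11_def by (simp add: algebra_simps eq_neg_iff_add_eq_0)
  hence "norm (a + c * t) = norm (b + d * t)" using s by (simp add: norm_mult)
  hence root: "\<beta> + 2 * Re (\<gamma> * t) = 0"
    using norm_sq_diff_on_circle[OF t, of a c b d] unfolding \<beta>_def \<gamma>_def by simp
  have "(cnj a * y + cnj c) * (a + c * y) - (cnj b * y + cnj d) * (b + d * y)
        = \<gamma> * y^2 + of_real \<beta> * y + cnj \<gamma>"
    unfolding \<beta>_def \<gamma>_def of_real_add of_real_diff complex_norm_square
    by (simp add: algebra_simps power2_eq_square)
  also have "\<dots> = \<gamma> * (y - t)^2"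
    using nonneg_on_circle_root_square[OF nonneg t root] by blast
  finally show ?thesis unfolding \<gamma>_def \<tau> by simp
qed

lemma bshift1_linear_fractional:
  fixes A B T0 U x y :: complex
  assumes F: "\<And>w. F (w, y) = (T0 + w * U) / (A + w * B)"
    and A: "A \<noteq> 0" and D: "A + x * B \<noteq> 0"
  shows "bshift1 F (x, y) = (U * A - T0 * B) / ((A + x * B) * A)"
proof (cases "x = 0")
  case True
  have "((\<lambda>w. (T0 + w * U) / (A + w * B)) has_field_derivative (U * A - T0 * B) / A^2) (at 0)"
    using A by (auto intro!: derivative_eq_intros simp: power2_eq_square)
  then show ?thesis using True by (simp add: bshift1_def F DERIV_imp_deriv power2_eq_square)
next
  case False
  have "(T0 + x * U) / (A + x * B) - T0 / A = x * ((U * A - T0 * B) / ((A + x * B) * A))"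
    using A D by (simp add: field_simps)
  then show ?thesis using False by (simp add: bshift1_def F)
qed

theorem lemma4p2:
  fixes a b c d lam :: complex and \<tau> :: "complex \<times> complex"
    and \<theta> f :: "complex \<times> complex \<Rightarrow> complex"
  assumes nozero: "\<forall>z\<in>bidisc. p11 a b c d z \<noteq> 0"
    and coprime: "coprime11 (p11 a b c d) (p11_tilde a b c d)"
    and deg11: "(a \<noteq> 0 \<or> c \<noteq> 0) \<and> (a \<noteq> 0 \<or> b \<noteq> 0)"
    and theta_def: "\<theta> = (\<lambda>z. p11_tilde a b c d z / p11 a b c d z)"
    and tau: "\<tau> \<in> torus2" and ptau: "p11 a b c d \<tau> = 0"
    and lam_sq: "lam^2 = cnj a * c - d * cnj b"
    and f_def: "f = (\<lambda>z. lam * (snd z - snd \<tau>) / p11 a b c d z)"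
  shows "(\<forall>z\<in>bidisc. bshift1 f z = f z * (- (b + d * snd z) / (a + c * snd z))) \<and>
         (\<forall>z\<in>bidisc. bshift1 \<theta> z = f z * lam * ((snd z - snd \<tau>) / (a + c * snd z)))"
proof (intro conjI ballI; clarify)
  fix x y assume z: "(x, y) \<in> bidisc"
  define A where "A = a + c * y"
  define B where "B = b + d * y"
  have p: "p11 a b c d (w, y) = A + w * B" for w unfolding p11_def A_def B_def by (simp add: algebra_simps)
  have "(0, y) \<in> bidisc" using z by (simp add: bidisc_def)
  hence A: "A \<noteq> 0" using nozero p[of 0] by fastforce
  have D: "A + x * B \<noteq> 0" using nozero z p[of x] by fastforce
  have f: "f (w, y) = (lam * (y - snd \<tau>) + w * 0) / (A + w * B)" for w by (simp add: f_def p)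
  have \<theta>: "\<theta> (w, y) = (cnj b * y + cnj d + w * (cnj a * y + cnj c)) / (A + w * B)" for w
    unfolding theta_def p p11_tilde_def by (simp add: algebra_simps)
  have num: "(cnj a * y + cnj c) * A - (cnj b * y + cnj d) * B = lam^2 * (y - snd \<tau>)^2"
    using p11_slice_determinant[OF nozero tau ptau, of y] lam_sq unfolding A_def B_def by simp
  show "bshift1 f (x, y) = f (x, y) * (- (b + d * snd (x, y)) / (a + c * snd (x, y)))"
    using bshift1_linear_fractional[OF f A D] by (simp add: f_def p A_def[symmetric] B_def[symmetric])
  show "bshift1 \<theta> (x, y) = f (x, y) * lam * ((snd (x, y) - snd \<tau>) / (a + c * snd (x, y)))"
    using bshift1_linear_fractional[OF \<theta> A D] unfolding A_def[symmetric] num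
    by (simp add: f_def p A_def[symmetric] power2_eq_square mult_ac)
qed

end
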